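(* An abstract $b$-flip $f$ (a move $(t_1\cup t_2,b)\to(t'_1\cup t'_2,b')$ on a branched quadrilateral) is a sliding flip if and only if the following holds. For every $(S,V)$ and every application of $f$ to a branched ideal triangulation $(T,b)$ of $(S,V)$, producing $(T',b')$, one has $d_b(v)=d_{b'}(v)$ for every $v\in V$.
   Context: $(S,V)$ denotes a closed surface with a finite set of marked points, $\chi(S)-|V|<0$. Ideal triangulations have vertex set exactly $V$. A branching $b$ orients all edges so that on each abstract triangle the orientations are induced by a total order $v_0<v_1<v_2$ of its vertices, edges pointing to the larger endpoint. In such a branched triangle, the corner at the middle vertex $v_1$ (the corner formed by the two edges $v_0v_1,v_1v_2$ carrying the "prevalent" orientation) is called the $1$-labelled corner. For a vertex $v$, the number of $1$-labelled corners at $v$ is even, and is denoted $2d_b(v)$. An abstract $b$-flip acts on a quadrilateral $Q=t_1\cup t_2$ triangulated by two triangles sharing a diagonal $e$. It replaces them by the two triangles $t'_1,t'_2$ sharing the other diagonal $e'$, with an orientation of $e'$ making the result branched while the boundary edges of $Q$ keep their orientations. Such a $b$-flip is forced if it is the unique branched enhancement of the naked flip starting from $(t_1\cup t_2,b)$. It is a sliding flip ($s$-flip) if at least one of it and its inverse $b$-flip $(t'_1\cup t'_2,b')\to(t_1\cup t_2,b)$ is forced. *)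

theory Defs
  imports Complex_Main
begin

text \<open>
A branched triangle has its corners named by their branching
rank 0 < 1 < 2 (corner 1 is the 1-labelled, i.e. middle, corner).  Its sides are named
by their (ordered) pair of corners; side (a,b) with a < b is oriented from corner a to
corner b.  A branched ideal triangulation is a finite set F of triangle names, a gluing
gl of sides (fixed-point free involution), which in the branched setting must identify
source with source and target with target, and a labelling vert of corners by the
ideal vertices, which is exactly the quotient of corners by the gluing.
\<close>

definition Sides :: "(nat \<times> nat) set" where
  "Sides = {(0,1),(0,2),(1,2)}"

type_synonym ('a,'v) btri =
  "'a set \<times> ('a \<times> (nat \<times> nat) \<Rightarrow> 'a \<times> (nat \<times> nat)) \<times> ('a \<Rightarrow> nat \<Rightarrow> 'v)"

definition corner_adj :: "'a set \<Rightarrow> ('a \<times> (nat \<times> nat) \<Rightarrow> 'a \<times> (nat \<times> nat)) \<Rightarrow> (('a \<times> nat) \<times> ('a \<times> nat)) set" where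
  "corner_adj F gl = {((t,a),(t',a')) | t s t' s' a a'. t \<in> F \<and> s \<in> Sides \<and> gl (t,s) = (t',s') \<and>
      ((a = fst s \<and> a' = fst s') \<or> (a = snd s \<and> a' = snd s'))}"

definition dual_adj :: "'a set \<Rightarrow> ('a \<times> (nat \<times> nat) \<Rightarrow> 'a \<times> (nat \<times> nat)) \<Rightarrow> ('a \<times> 'a) set" where
  "dual_adj F gl = {(t,t') | t s t' s'. t \<in> F \<and> s \<in> Sides \<and> gl (t,s) = (t',s')}"

definition branched_triangulation :: "('a,'v) btri \<Rightarrow> bool" where
  "branched_triangulation T \<longleftrightarrow> (case T of (F, gl, vert) \<Rightarrow>
     finite F \<and> F \<noteq> {} \<and>
     (\<forall>t\<in>F. \<forall>s\<in>Sides. gl (t,s) \<in> F \<times> Sides \<and> gl (gl (t,s)) = (t,s) \<and> gl (t,s) \<noteq> (t,s)) \<and>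
     (\<forall>t\<in>F. \<forall>s\<in>Sides.
        vert t (fst s) = vert (fst (gl (t,s))) (fst (snd (gl (t,s)))) \<and>
        vert t (snd s) = vert (fst (gl (t,s))) (snd (snd (gl (t,s))))) \<and>
     (\<forall>t\<in>F. \<forall>t'\<in>F. \<forall>c<3. \<forall>c'<3. vert t c = vert t' c' \<longrightarrow>
        ((t,c),(t',c')) \<in> (corner_adj F gl)\<^sup>*) \<and>
     (\<forall>t\<in>F. \<forall>t'\<in>F. (t,t') \<in> (dual_adj F gl)\<^sup>*))"

definition tri_vertices :: "('a,'v) btri \<Rightarrow> 'v set" where
  "tri_vertices T = (case T of (F, gl, vert) \<Rightarrow> {vert t c | t c. t \<in> F \<and> c < 3})"

definition d_b :: "('a,'v) btri \<Rightarrow> 'v \<Rightarrow> real" where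
  "d_b T v = (case T of (F, gl, vert) \<Rightarrow> real (card {t \<in> F. vert t 1 = v}) / 2)"

text \<open>
The abstract quadrilateral has vertices 0,1,2,3 in cyclic order,
diagonal e = {0,2}, triangles t1 = {0,1,2}, t2 = {0,2,3}; after the flip the diagonal is
e' = {1,3} and the triangles are t1' = {0,1,3}, t2' = {1,2,3}.  A b-flip is encoded by
the orientations D of all six edges (D i j: edge oriented from i to j): the four boundary
edges and e carry b, the boundary edges and e' carry b'; both pairs of triangles must be
branched (acyclically oriented).
\<close>

definition tournament4 :: "(nat \<Rightarrow> nat \<Rightarrow> bool) \<Rightarrow> bool" where
  "tournament4 D \<longleftrightarrow> (\<forall>i<4. \<not> D i i) \<and> (\<forall>i<4. \<forall>j<4. i \<noteq> j \<longrightarrow> (D i j \<longleftrightarrow> \<not> D j i))"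

definition acyclic_tri :: "(nat \<Rightarrow> nat \<Rightarrow> bool) \<Rightarrow> nat \<Rightarrow> nat \<Rightarrow> nat \<Rightarrow> bool" where
  "acyclic_tri D a b c \<longleftrightarrow> \<not> (D a b \<and> D b c \<and> D c a) \<and> \<not> (D a c \<and> D c b \<and> D b a)"

definition Q1 :: "nat set" where "Q1 = {0,1,2}"
definition Q2 :: "nat set" where "Q2 = {0,2,3}"
definition Q1' :: "nat set" where "Q1' = {0,1,3}"
definition Q2' :: "nat set" where "Q2' = {1,2,3}"

definition bflip :: "(nat \<Rightarrow> nat \<Rightarrow> bool) \<Rightarrow> bool" where
  "bflip D \<longleftrightarrow> tournament4 D \<and> acyclic_tri D 0 1 2 \<and> acyclic_tri D 0 2 3 \<and>
     acyclic_tri D 0 1 3 \<and> acyclic_tri D 1 2 3"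

text \<open>Branched enhancements of the naked flip from (t1 \<union> t2, b): only the orientation
of e' = {1,3} may vary.  Of the inverse naked flip from (t1' \<union> t2', b'): only e = {0,2}.\<close>
definition enhancements :: "(nat \<Rightarrow> nat \<Rightarrow> bool) \<Rightarrow> (nat \<Rightarrow> nat \<Rightarrow> bool) set" where
  "enhancements D = {D'. bflip D' \<and> (\<forall>i j. {i,j} \<noteq> {1,3} \<longrightarrow> D' i j = D i j)}"

definition inv_enhancements :: "(nat \<Rightarrow> nat \<Rightarrow> bool) \<Rightarrow> (nat \<Rightarrow> nat \<Rightarrow> bool) set" where
  "inv_enhancements D = {D'. bflip D' \<and> (\<forall>i j. {i,j} \<noteq> {0,2} \<longrightarrow> D' i j = D i j)}"

definition forced :: "(nat \<Rightarrow> nat \<Rightarrow> bool) \<Rightarrow> bool" where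
  "forced D \<longleftrightarrow> card (enhancements D) = 1"

definition inv_forced :: "(nat \<Rightarrow> nat \<Rightarrow> bool) \<Rightarrow> bool" where
  "inv_forced D \<longleftrightarrow> card (inv_enhancements D) = 1"

definition sliding :: "(nat \<Rightarrow> nat \<Rightarrow> bool) \<Rightarrow> bool" where
  "sliding D \<longleftrightarrow> forced D \<or> inv_forced D"

text \<open>Branching rank (corner name) of quad vertex p in abstract triangle A.\<close>
definition rank :: "(nat \<Rightarrow> nat \<Rightarrow> bool) \<Rightarrow> nat set \<Rightarrow> nat \<Rightarrow> nat" where
  "rank D A p = card {q \<in> A. q \<noteq> p \<and> D q p}"

definition side_of :: "(nat \<Rightarrow> nat \<Rightarrow> bool) \<Rightarrow> nat set \<Rightarrow> nat \<Rightarrow> nat \<Rightarrow> nat \<times> nat" where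
  "side_of D A p q = (min (rank D A p) (rank D A q), max (rank D A p) (rank D A q))"

definition flip_applicable :: "(nat \<Rightarrow> nat \<Rightarrow> bool) \<Rightarrow> ('a,'v) btri \<Rightarrow> 'a \<Rightarrow> 'a \<Rightarrow> bool" where
  "flip_applicable D T x1 x2 \<longleftrightarrow> (case T of (F, gl, vert) \<Rightarrow>
     x1 \<in> F \<and> x2 \<in> F \<and> x1 \<noteq> x2 \<and> gl (x1, side_of D Q1 0 2) = (x2, side_of D Q2 0 2))"

definition BE :: "(nat \<times> nat) set" where
  "BE = {(0,1),(1,2),(2,3),(3,0)}"

definition old_bside :: "(nat \<Rightarrow> nat \<Rightarrow> bool) \<Rightarrow> 'a \<Rightarrow> 'a \<Rightarrow> nat \<times> nat \<Rightarrow> 'a \<times> (nat \<times> nat)" where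
  "old_bside D x1 x2 k = (if k \<in> {(0,1),(1,2)} then (x1, side_of D Q1 (fst k) (snd k))
                          else (x2, side_of D Q2 (fst k) (snd k)))"

definition new_bside :: "(nat \<Rightarrow> nat \<Rightarrow> bool) \<Rightarrow> 'a \<Rightarrow> 'a \<Rightarrow> nat \<times> nat \<Rightarrow> 'a \<times> (nat \<times> nat)" where
  "new_bside D x1 x2 k = (if k \<in> {(0,1),(3,0)} then (x1, side_of D Q1' (fst k) (snd k))
                          else (x2, side_of D Q2' (fst k) (snd k)))"

definition lift_side :: "(nat \<Rightarrow> nat \<Rightarrow> bool) \<Rightarrow> 'a \<Rightarrow> 'a \<Rightarrow> 'a \<times> (nat \<times> nat) \<Rightarrow> 'a \<times> (nat \<times> nat)" where
  "lift_side D x1 x2 \<tau> = (if \<exists>k\<in>BE. \<tau> = old_bside D x1 x2 k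
      then new_bside D x1 x2 (THE k. k \<in> BE \<and> \<tau> = old_bside D x1 x2 k) else \<tau>)"

definition flip_gl :: "(nat \<Rightarrow> nat \<Rightarrow> bool) \<Rightarrow> 'a \<Rightarrow> 'a \<Rightarrow> ('a \<times> (nat \<times> nat) \<Rightarrow> 'a \<times> (nat \<times> nat))
    \<Rightarrow> 'a \<times> (nat \<times> nat) \<Rightarrow> 'a \<times> (nat \<times> nat)" where
  "flip_gl D x1 x2 gl \<sigma> =
     (if \<sigma> = (x1, side_of D Q1' 1 3) then (x2, side_of D Q2' 1 3)
      else if \<sigma> = (x2, side_of D Q2' 1 3) then (x1, side_of D Q1' 1 3)
      else if \<exists>k\<in>BE. \<sigma> = new_bside D x1 x2 k
        then lift_side D x1 x2 (gl (old_bside D x1 x2 (THE k. k \<in> BE \<and> \<sigma> = new_bside D x1 x2 k)))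
      else lift_side D x1 x2 (gl \<sigma>))"

definition quad_vert :: "(nat \<Rightarrow> nat \<Rightarrow> bool) \<Rightarrow> 'a \<Rightarrow> 'a \<Rightarrow> ('a \<Rightarrow> nat \<Rightarrow> 'v) \<Rightarrow> nat \<Rightarrow> 'v" where
  "quad_vert D x1 x2 vert p = (if p \<in> Q1 then vert x1 (rank D Q1 p) else vert x2 (rank D Q2 p))"

definition flip_vert :: "(nat \<Rightarrow> nat \<Rightarrow> bool) \<Rightarrow> 'a \<Rightarrow> 'a \<Rightarrow> ('a \<Rightarrow> nat \<Rightarrow> 'v) \<Rightarrow> 'a \<Rightarrow> nat \<Rightarrow> 'v" where
  "flip_vert D x1 x2 vert t c =
     (if t = x1 then quad_vert D x1 x2 vert (THE p. p \<in> Q1' \<and> rank D Q1' p = c)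
      else if t = x2 then quad_vert D x1 x2 vert (THE p. p \<in> Q2' \<and> rank D Q2' p = c)
      else vert t c)"

text \<open>The result (T', b') of applying the flip D to (T, b) at x1, x2; the names x1, x2
are reused for t1', t2'.\<close>
definition apply_flip :: "(nat \<Rightarrow> nat \<Rightarrow> bool) \<Rightarrow> ('a,'v) btri \<Rightarrow> 'a \<Rightarrow> 'a \<Rightarrow> ('a,'v) btri" where
  "apply_flip D T x1 x2 = (case T of (F, gl, vert) \<Rightarrow>
     (F, flip_gl D x1 x2 gl, flip_vert D x1 x2 vert))"

end

theory Submission
  imports Defs
begin

text \<open>
The 1-labelled corner of a branched triangle sits at its middle vertex, the one with an incoming
and an outgoing edge. A b-flip is sliding exactly when the boundary of the quadrilateral is not
alternating, i.e. the vertices 0 and 2 are not both sources or both sinks of the boundary cycle.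
In the non-alternating case the middle vertices of t1', t2' are those of t1, t2 (possibly
swapped), so no vertex changes its number of 1-labelled corners. In the alternating case the new
middle vertices are 1 and 3, which are sources or sinks of the old triangles; on the doubled
triangle this moves both 1-labelled corners away from the vertex carrying them.
\<close>

definition branched_on :: "(nat \<Rightarrow> nat \<Rightarrow> bool) \<Rightarrow> nat \<Rightarrow> nat \<Rightarrow> nat \<Rightarrow> bool" where
  "branched_on D a b c \<longleftrightarrow> distinct [a, b, c] \<and>
     (D b a \<longleftrightarrow> \<not> D a b) \<and> (D c a \<longleftrightarrow> \<not> D a c) \<and> (D c b \<longleftrightarrow> \<not> D b c) \<and> acyclic_tri D a b c"

lemma rank_triple:
  assumes "distinct [a, b, c]"
  shows "rank D {a, b, c} p = of_bool (a \<noteq> p \<and> D a p) + of_bool (b \<noteq> p \<and> D b p) + of_bool (c \<noteq> p \<and> D c p)"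
proof -
  have "{q \<in> {a, b, c}. q \<noteq> p \<and> D q p} =
      (if a \<noteq> p \<and> D a p then {a} else {}) \<union> (if b \<noteq> p \<and> D b p then {b} else {}) \<union> (if c \<noteq> p \<and> D c p then {c} else {})"
    by auto
  then show ?thesis
    using assms unfolding rank_def
    by (cases "a \<noteq> p \<and> D a p"; cases "b \<noteq> p \<and> D b p"; cases "c \<noteq> p \<and> D c p"; simp)
qed

lemma branched_onD:
  assumes "branched_on D a b c"
  shows "a \<noteq> b" "a \<noteq> c" "b \<noteq> c" "D b a \<longleftrightarrow> \<not> D a b" "D c a \<longleftrightarrow> \<not> D a c" "D c b \<longleftrightarrow> \<not> D b c"
    "\<not> (D a b \<and> D b c \<and> D c a)" "\<not> (D a c \<and> D c b \<and> D b a)"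
  using assms unfolding branched_on_def acyclic_tri_def by auto

lemma rank_less_iff:
  assumes "branched_on D a b c" "p \<in> {a, b, c}" "q \<in> {a, b, c}" "p \<noteq> q"
  shows "rank D {a, b, c} p < rank D {a, b, c} q \<longleftrightarrow> D p q"
proof -
  note bD = branched_onD[OF assms(1)]
  from assms(2,3,4) consider "p = a" "q = b" | "p = a" "q = c" | "p = b" "q = a" | "p = b" "q = c" | "p = c" "q = a" | "p = c" "q = b"
    by blast
  then show ?thesis
    by cases (use bD in \<open>cases "D a b"; cases "D a c"; cases "D b c"; simp add: rank_triple\<close>)+
qed

lemma rank_less_3:
  assumes "branched_on D a b c" "p \<in> {a, b, c}"
  shows "rank D {a, b, c} p < 3"
proof -
  note bD = branched_onD[OF assms(1)]
  from assms(2) consider "p = a" | "p = b" | "p = c" by blast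
  then show ?thesis
    by cases (use bD in \<open>cases "D a b"; cases "D a c"; cases "D b c"; simp add: rank_triple\<close>)+
qed

definition middle :: "(nat \<Rightarrow> nat \<Rightarrow> bool) \<Rightarrow> nat \<Rightarrow> nat \<Rightarrow> nat \<Rightarrow> nat" where
  "middle D a b c = (if D a b = D b c then b else if D b a = D a c then a else c)"

lemma rank_eq_1_iff_middle:
  assumes "branched_on D a b c" "p \<in> {a, b, c}"
  shows "rank D {a, b, c} p = 1 \<longleftrightarrow> p = middle D a b c"
proof -
  note bD = branched_onD[OF assms(1)]
  from assms(2) consider "p = a" | "p = b" | "p = c" by blast
  then show ?thesis unfolding middle_def
    by cases (use bD in \<open>cases "D a b"; cases "D a c"; cases "D b c"; simp add: rank_triple\<close>)+
qed

lemma middle_mem: "middle D a b c \<in> {a, b, c}"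
  unfolding middle_def by auto

lemma the_rank_1_eq_middle:
  assumes "branched_on D a b c"
  shows "(THE p. p \<in> {a, b, c} \<and> rank D {a, b, c} p = 1) = middle D a b c"
  using rank_eq_1_iff_middle[OF assms] middle_mem by (intro the_equality) auto

lemma bflip_converse:
  assumes "bflip D"
  shows "D 1 0 \<longleftrightarrow> \<not> D 0 1" "D 2 0 \<longleftrightarrow> \<not> D 0 2" "D 3 0 \<longleftrightarrow> \<not> D 0 3"
    "D 2 1 \<longleftrightarrow> \<not> D 1 2" "D 3 1 \<longleftrightarrow> \<not> D 1 3" "D 3 2 \<longleftrightarrow> \<not> D 2 3"
proof -
  have converse: "D j i \<longleftrightarrow> \<not> D i j" if "i < 4" "j < 4" "i \<noteq> j" for i j :: nat
    using assms that unfolding bflip_def tournament4_def by blast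
  show "D 1 0 \<longleftrightarrow> \<not> D 0 1" "D 2 0 \<longleftrightarrow> \<not> D 0 2" "D 3 0 \<longleftrightarrow> \<not> D 0 3"
    "D 2 1 \<longleftrightarrow> \<not> D 1 2" "D 3 1 \<longleftrightarrow> \<not> D 1 3" "D 3 2 \<longleftrightarrow> \<not> D 2 3"
    by (rule converse; simp)+
qed

lemma bflip_acyclic:
  assumes "bflip D"
  shows "acyclic_tri D 0 1 2" "acyclic_tri D 0 2 3" "acyclic_tri D 0 1 3" "acyclic_tri D 1 2 3"
  using assms unfolding bflip_def by simp_all

lemma bflip_branched_on:
  assumes "bflip D"
  shows "branched_on D 0 1 2" "branched_on D 0 2 3" "branched_on D 0 1 3" "branched_on D 1 2 3"
  using bflip_acyclic[OF assms] bflip_converse[OF assms] unfolding branched_on_def by simp_all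

definition reverse_edge :: "nat \<Rightarrow> nat \<Rightarrow> (nat \<Rightarrow> nat \<Rightarrow> bool) \<Rightarrow> nat \<Rightarrow> nat \<Rightarrow> bool" where
  "reverse_edge a b D = (\<lambda>i j. if (i = a \<and> j = b) \<or> (i = b \<and> j = a) then \<not> D i j else D i j)"

lemma tournament4_reverse_edge:
  assumes "tournament4 D" "a \<noteq> b"
  shows "tournament4 (reverse_edge a b D)"
  unfolding tournament4_def
proof (intro conjI allI impI)
  fix i :: nat assume "i < 4"
  then show "\<not> reverse_edge a b D i i"
    using assms unfolding tournament4_def reverse_edge_def by auto
next
  fix i j :: nat assume "i < 4" "j < 4" "i \<noteq> j"
  then have "D i j \<longleftrightarrow> \<not> D j i" using assms(1) unfolding tournament4_def by blast
  then show "reverse_edge a b D i j \<longleftrightarrow> \<not> reverse_edge a b D j i"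
    unfolding reverse_edge_def by auto
qed

lemma agree_off_edge:
  assumes "tournament4 D" "tournament4 D'" "a \<noteq> b" "a < 4" "b < 4"
    and agree: "\<forall>i j. {i, j} \<noteq> {a, b} \<longrightarrow> D' i j = D i j"
  shows "D' = D \<or> D' = reverse_edge a b D"
proof -
  have converse: "D' b a \<longleftrightarrow> \<not> D' a b" "D b a \<longleftrightarrow> \<not> D a b"
    using assms(1-5) unfolding tournament4_def by blast+
  show ?thesis
  proof (cases "D' a b = D a b")
    case True
    then have "D' i j = D i j" for i j
      using converse agree by (cases "{i, j} = {a, b}") (auto simp: doubleton_eq_iff)
    then show ?thesis by blast
  next
    case False
    then have "D' i j = reverse_edge a b D i j" for i j
      using converse agree assms(3) unfolding reverse_edge_def
      by (cases "{i, j} = {a, b}") (auto simp: doubleton_eq_iff)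
    then show ?thesis by blast
  qed
qed

lemma card_edge_enhancements_eq_1_iff:
  assumes "bflip D" "a \<noteq> b" "a < 4" "b < 4"
  shows "card {D'. bflip D' \<and> (\<forall>i j. {i, j} \<noteq> {a, b} \<longrightarrow> D' i j = D i j)} = 1 \<longleftrightarrow>
    \<not> bflip (reverse_edge a b D)"
proof -
  define R where "R = reverse_edge a b D"
  have "R a b \<noteq> D a b"
    unfolding R_def reverse_edge_def by simp
  then have "R \<noteq> D" by metis
  moreover have "\<forall>i j. {i, j} \<noteq> {a, b} \<longrightarrow> R i j = D i j"
    unfolding R_def reverse_edge_def by (auto simp: doubleton_eq_iff)
  moreover have "D' = D \<or> D' = R"
    if "bflip D'" "\<forall>i j. {i, j} \<noteq> {a, b} \<longrightarrow> D' i j = D i j" for D'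
    using agree_off_edge assms that unfolding R_def bflip_def by blast
  ultimately have "{D'. bflip D' \<and> (\<forall>i j. {i, j} \<noteq> {a, b} \<longrightarrow> D' i j = D i j)} =
      (if bflip R then {D, R} else {D})"
    using assms(1) by (cases "bflip R") auto
  then show ?thesis
    using \<open>R \<noteq> D\<close> unfolding R_def by simp
qed

lemma forced_iff: "bflip D \<Longrightarrow> forced D \<longleftrightarrow> \<not> bflip (reverse_edge 1 3 D)"
  unfolding forced_def enhancements_def by (rule card_edge_enhancements_eq_1_iff) auto

lemma inv_forced_iff: "bflip D \<Longrightarrow> inv_forced D \<longleftrightarrow> \<not> bflip (reverse_edge 0 2 D)"
  unfolding inv_forced_def inv_enhancements_def by (rule card_edge_enhancements_eq_1_iff) auto

definition alternating_boundary :: "(nat \<Rightarrow> nat \<Rightarrow> bool) \<Rightarrow> bool" where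
  "alternating_boundary D \<longleftrightarrow>
     (D 0 1 \<and> D 0 3 \<and> D 2 1 \<and> D 2 3) \<or> (D 1 0 \<and> D 3 0 \<and> D 1 2 \<and> D 3 2)"

lemma sliding_iff_not_alternating_boundary:
  assumes "bflip D"
  shows "sliding D \<longleftrightarrow> \<not> alternating_boundary D"
proof -
  have "tournament4 D"
    using assms unfolding bflip_def by simp
  then have reversed_bflip: "bflip (reverse_edge a b D) \<longleftrightarrow>
      acyclic_tri (reverse_edge a b D) 0 1 2 \<and> acyclic_tri (reverse_edge a b D) 0 2 3 \<and>
      acyclic_tri (reverse_edge a b D) 0 1 3 \<and> acyclic_tri (reverse_edge a b D) 1 2 3"
    if "a \<noteq> b" for a b
    using tournament4_reverse_edge that unfolding bflip_def by blast
  have "(1::nat) \<noteq> 3" "(0::nat) \<noteq> 2" by simp_all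
  note reversed = reversed_bflip[OF this(1)] reversed_bflip[OF this(2)]
  show ?thesis
    unfolding sliding_def forced_iff[OF assms] inv_forced_iff[OF assms] reversed
    using bflip_acyclic[OF assms] bflip_converse[OF assms]
    unfolding acyclic_tri_def alternating_boundary_def reverse_edge_def
    by (cases "D 0 1"; cases "D 0 2"; cases "D 0 3"; cases "D 1 2"; cases "D 1 3"; cases "D 2 3"; simp)
qed

lemma middles_preserved:
  assumes "bflip D" "\<not> alternating_boundary D"
  shows "(middle D 0 1 3 = middle D 0 1 2 \<and> middle D 1 2 3 = middle D 0 2 3) \<or>
    (middle D 0 1 3 = middle D 0 2 3 \<and> middle D 1 2 3 = middle D 0 1 2)"
  using assms(2) bflip_converse[OF assms(1)] bflip_acyclic[OF assms(1)]
  unfolding acyclic_tri_def alternating_boundary_def middle_def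
  by (cases "D 0 1"; cases "D 0 2"; cases "D 0 3"; cases "D 1 2"; cases "D 1 3"; cases "D 2 3"; simp)

lemma alternating_boundary_ranks:
  assumes "bflip D" "alternating_boundary D"
  shows "rank D Q1 0 = rank D Q2 0" "rank D Q1 2 = rank D Q2 2"
    "rank D Q1 1 \<noteq> 1" "rank D Q2 3 \<noteq> 1"
    "middle D 0 1 3 \<in> {1, 3}" "middle D 1 2 3 \<in> {1, 3}"
proof -
  have ranks: "rank D Q1 p = of_bool (0 \<noteq> p \<and> D 0 p) + of_bool (1 \<noteq> p \<and> D 1 p) + of_bool (2 \<noteq> p \<and> D 2 p)"
    "rank D Q2 p = of_bool (0 \<noteq> p \<and> D 0 p) + of_bool (2 \<noteq> p \<and> D 2 p) + of_bool (3 \<noteq> p \<and> D 3 p)" for p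
    unfolding Q1_def Q2_def by (simp_all add: rank_triple)
  have "rank D Q1 0 = rank D Q2 0 \<and> rank D Q1 2 = rank D Q2 2 \<and>
      rank D Q1 1 \<noteq> 1 \<and> rank D Q2 3 \<noteq> 1 \<and>
      middle D 0 1 3 \<in> {1, 3} \<and> middle D 1 2 3 \<in> {1, 3}"
    using assms(2) bflip_converse[OF assms(1)] bflip_acyclic[OF assms(1)]
    unfolding acyclic_tri_def alternating_boundary_def middle_def ranks
    by (cases "D 0 1"; cases "D 0 2"; cases "D 0 3"; cases "D 1 2"; cases "D 1 3"; cases "D 2 3"; simp)
  then show "rank D Q1 0 = rank D Q2 0" "rank D Q1 2 = rank D Q2 2"
    "rank D Q1 1 \<noteq> 1" "rank D Q2 3 \<noteq> 1"
    "middle D 0 1 3 \<in> {1, 3}" "middle D 1 2 3 \<in> {1, 3}"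
    by blast+
qed

lemma pair_in_Sides: "a < b \<Longrightarrow> b < 3 \<Longrightarrow> (a, b) \<in> Sides"
  unfolding Sides_def by (cases a; cases b) auto

lemma glued_diagonal_corners:
  assumes "bflip D" "branched_triangulation (F, gl, vert)" "flip_applicable D (F, gl, vert) x1 x2"
    and "p \<in> {0, 2}"
  shows "vert x1 (rank D Q1 p) = vert x2 (rank D Q2 p)"
proof -
  note branched = bflip_branched_on[OF assms(1)]
  have order_Q1: "rank D Q1 0 < rank D Q1 2 \<longleftrightarrow> D 0 2" "rank D Q1 2 < rank D Q1 0 \<longleftrightarrow> \<not> D 0 2"
    using rank_less_iff[OF branched(1)] bflip_converse(2)[OF assms(1)] unfolding Q1_def by simp_all
  have order_Q2: "rank D Q2 0 < rank D Q2 2 \<longleftrightarrow> D 0 2" "rank D Q2 2 < rank D Q2 0 \<longleftrightarrow> \<not> D 0 2"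
    using rank_less_iff[OF branched(2)] bflip_converse(2)[OF assms(1)] unfolding Q2_def by simp_all
  have "rank D Q1 0 < 3" "rank D Q1 2 < 3"
    using rank_less_3[OF branched(1)] unfolding Q1_def by simp_all
  then have side: "side_of D Q1 0 2 \<in> Sides"
    using order_Q1 pair_in_Sides unfolding side_of_def by (cases "D 0 2") (auto simp: min_def max_def)
  have "x1 \<in> F" "gl (x1, side_of D Q1 0 2) = (x2, side_of D Q2 0 2)"
    using assms(3) unfolding flip_applicable_def by simp_all
  moreover have "\<forall>t\<in>F. \<forall>s\<in>Sides. vert t (fst s) = vert (fst (gl (t, s))) (fst (snd (gl (t, s)))) \<and>
      vert t (snd s) = vert (fst (gl (t, s))) (snd (snd (gl (t, s))))"
    using assms(2) unfolding branched_triangulation_def by simp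
  ultimately have "vert x1 (fst (side_of D Q1 0 2)) = vert x2 (fst (side_of D Q2 0 2)) \<and>
      vert x1 (snd (side_of D Q1 0 2)) = vert x2 (snd (side_of D Q2 0 2))"
    using side by force
  then show ?thesis
    using assms(4) order_Q1 order_Q2 unfolding side_of_def
    by (cases "D 0 2") (auto simp: min_def max_def)
qed

lemma corner_eq_quad_vert:
  assumes "bflip D" "branched_triangulation (F, gl, vert)" "flip_applicable D (F, gl, vert) x1 x2"
    and "p \<in> Q2"
  shows "vert x2 (rank D Q2 p) = quad_vert D x1 x2 vert p"
proof (cases "p \<in> Q1")
  case True
  with assms(4) have "p \<in> {0, 2}" unfolding Q1_def Q2_def by auto
  with True show ?thesis
    using glued_diagonal_corners[OF assms(1-3)] unfolding quad_vert_def by simp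
next
  case False
  then show ?thesis unfolding quad_vert_def by simp
qed

lemma old_middle_corners:
  assumes "bflip D" "branched_triangulation (F, gl, vert)" "flip_applicable D (F, gl, vert) x1 x2"
  shows "vert x1 1 = quad_vert D x1 x2 vert (middle D 0 1 2)"
    "vert x2 1 = quad_vert D x1 x2 vert (middle D 0 2 3)"
proof -
  note branched = bflip_branched_on[OF assms(1)]
  have "middle D 0 1 2 \<in> Q1" "rank D Q1 (middle D 0 1 2) = 1"
    using middle_mem rank_eq_1_iff_middle[OF branched(1)] unfolding Q1_def by blast+
  then show "vert x1 1 = quad_vert D x1 x2 vert (middle D 0 1 2)"
    unfolding quad_vert_def by simp
  have "middle D 0 2 3 \<in> Q2" "rank D Q2 (middle D 0 2 3) = 1"
    using middle_mem rank_eq_1_iff_middle[OF branched(2)] unfolding Q2_def by blast+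
  then show "vert x2 1 = quad_vert D x1 x2 vert (middle D 0 2 3)"
    using corner_eq_quad_vert[OF assms] by metis
qed

lemma new_middle_corners:
  assumes "bflip D" "x1 \<noteq> x2"
  shows "flip_vert D x1 x2 vert x1 1 = quad_vert D x1 x2 vert (middle D 0 1 3)"
    "flip_vert D x1 x2 vert x2 1 = quad_vert D x1 x2 vert (middle D 1 2 3)"
  using assms(2) the_rank_1_eq_middle[OF bflip_branched_on(3)[OF assms(1)]]
    the_rank_1_eq_middle[OF bflip_branched_on(4)[OF assms(1)]]
  unfolding flip_vert_def Q1'_def Q2'_def by simp_all

lemma card_filter_split_two:
  assumes "finite F" "x1 \<in> F" "x2 \<in> F" "x1 \<noteq> x2"
  shows "card {t \<in> F. P t} = card {t \<in> F - {x1, x2}. P t} + of_bool (P x1) + of_bool (P x2)"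
proof -
  define E where "E = {x1} \<inter> Collect P \<union> {x2} \<inter> Collect P"
  have "{t \<in> F. P t} = {t \<in> F - {x1, x2}. P t} \<union> E"
    using assms unfolding E_def by auto
  then have "card {t \<in> F. P t} = card {t \<in> F - {x1, x2}. P t} + card E"
    by (simp only:) (rule card_Un_disjoint, use assms in \<open>auto simp: E_def\<close>)
  moreover have "card E = of_bool (P x1) + of_bool (P x2)"
    using assms(4) unfolding E_def by (cases "P x1"; cases "P x2") simp_all
  ultimately show ?thesis by simp
qed

lemma d_b_apply_flip:
  fixes T :: "('a, 'v) btri"
  assumes "bflip D" "\<not> alternating_boundary D"
    and "branched_triangulation T" "flip_applicable D T x1 x2"
  shows "d_b (apply_flip D T x1 x2) v = d_b T v"
proof -
  obtain F gl vert where T: "T = (F, gl, vert)" by (cases T)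
  have "finite F" using assms(3) unfolding T branched_triangulation_def by simp
  moreover have x: "x1 \<in> F" "x2 \<in> F" "x1 \<noteq> x2"
    using assms(4) unfolding T flip_applicable_def by simp_all
  ultimately have count: "card {t \<in> F. f t 1 = v} = card {t \<in> F - {x1, x2}. f t 1 = v} +
      of_bool (f x1 1 = v) + of_bool (f x2 1 = v)" for f :: "'a \<Rightarrow> nat \<Rightarrow> 'v"
    by (rule card_filter_split_two)
  have "flip_vert D x1 x2 vert t 1 = vert t 1" if "t \<noteq> x1" "t \<noteq> x2" for t
    using that unfolding flip_vert_def by simp
  then have outside: "{t \<in> F - {x1, x2}. flip_vert D x1 x2 vert t 1 = v} = {t \<in> F - {x1, x2}. vert t 1 = v}"
    by auto
  have "of_bool (flip_vert D x1 x2 vert x1 1 = v) + of_bool (flip_vert D x1 x2 vert x2 1 = v) =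
      (of_bool (vert x1 1 = v) + of_bool (vert x2 1 = v) :: nat)"
    unfolding new_middle_corners[OF assms(1) x(3)] old_middle_corners[OF assms(1,3,4)[unfolded T]]
    using middles_preserved[OF assms(1,2)] by (elim disjE conjE) (simp_all add: add.commute)
  then have "card {t \<in> F. flip_vert D x1 x2 vert t 1 = v} = card {t \<in> F. vert t 1 = v}"
    unfolding count[of "flip_vert D x1 x2 vert"] count[of vert] outside by simp
  then show ?thesis
    unfolding T d_b_def apply_flip_def by simp
qed

definition doubled_triangle :: "(nat, nat) btri" where
  "doubled_triangle = ({0, 1}, \<lambda>(t, s). (1 - t, s), \<lambda>t c. c)"

lemma branched_triangulation_doubled_triangle: "branched_triangulation doubled_triangle"
proof -
  let ?gl = "\<lambda>(t, s). (1 - t, s) :: nat \<times> nat \<times> nat"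
  have other: "t' = t \<or> t' = 1 - t" if "t \<in> {0, 1}" "t' \<in> {0, 1}" for t t' :: nat
    using that by auto
  have sides: "(0, 1) \<in> Sides" "(0, 2) \<in> Sides" unfolding Sides_def by auto
  have "((t, c), (1 - t, c)) \<in> corner_adj {0, 1} ?gl" if "t \<in> {0, 1}" "c < 3" for t c
  proof -
    have "c = 0 \<or> c = 1 \<or> c = 2" using that(2) by auto
    then show ?thesis using that(1) sides unfolding corner_adj_def by (elim disjE) fastforce+
  qed
  then have corners: "\<forall>t\<in>{0, 1}. \<forall>t'\<in>{0, 1}. \<forall>c<3. \<forall>c'<3. c = c' \<longrightarrow>
      ((t, c), (t', c')) \<in> (corner_adj {0, 1} ?gl)\<^sup>*"
    using other by fastforce
  have "(t, 1 - t) \<in> dual_adj {0, 1} ?gl" if "t \<in> {0, 1}" for t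
    using that sides unfolding dual_adj_def by fastforce
  then have dual: "\<forall>t\<in>{0, 1}. \<forall>t'\<in>{0, 1}. (t, t') \<in> (dual_adj {0, 1} ?gl)\<^sup>*"
    using other by fastforce
  have "\<forall>t\<in>{0, 1}. \<forall>s\<in>Sides. ?gl (t, s) \<in> {0, 1} \<times> Sides \<and> ?gl (?gl (t, s)) = (t, s) \<and> ?gl (t, s) \<noteq> (t, s)"
    by auto
  then show ?thesis
    using corners dual unfolding branched_triangulation_def doubled_triangle_def by simp
qed

lemma flip_applicable_doubled_triangle:
  assumes "bflip D" "alternating_boundary D"
  shows "flip_applicable D doubled_triangle 0 1"
  using alternating_boundary_ranks[OF assms]
  unfolding flip_applicable_def doubled_triangle_def side_of_def by simp

lemma d_b_doubled_triangle: "d_b doubled_triangle 1 = 1"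
proof -
  have "{t \<in> {0, 1 :: nat}. True} = {0, 1}" by auto
  then show ?thesis
    unfolding d_b_def doubled_triangle_def by simp
qed

lemma d_b_apply_flip_doubled_triangle:
  assumes "bflip D" "alternating_boundary D"
  shows "d_b (apply_flip D doubled_triangle 0 1) 1 = 0"
proof -
  note alternating = alternating_boundary_ranks[OF assms]
  let ?vert = "\<lambda>(t::nat) (c::nat). c"
  have old_rank: "quad_vert D (0::nat) 1 ?vert p \<noteq> 1" if "p \<in> {1, 3}" for p
    using that alternating(3,4) unfolding quad_vert_def Q1_def by auto
  have "flip_vert D 0 1 ?vert 0 1 \<noteq> 1" "flip_vert D 0 1 ?vert 1 1 \<noteq> 1"
    using old_rank[OF alternating(5)] old_rank[OF alternating(6)]
    unfolding new_middle_corners[OF assms(1) zero_neq_one] by simp_all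
  then have "{t \<in> {0, 1}. flip_vert D 0 1 ?vert t 1 = 1} = {}"
    by blast
  then show ?thesis
    unfolding d_b_def apply_flip_def doubled_triangle_def by simp
qed

definition preserves_d_b :: "(nat \<Rightarrow> nat \<Rightarrow> bool) \<Rightarrow> bool" where
  "preserves_d_b D \<longleftrightarrow> (\<forall>(T :: (nat, nat) btri) x1 x2.
     branched_triangulation T \<and> flip_applicable D T x1 x2 \<longrightarrow>
     (\<forall>v \<in> tri_vertices T. d_b T v = d_b (apply_flip D T x1 x2) v))"

lemma preserves_d_b_iff_not_alternating_boundary:
  assumes "bflip D"
  shows "preserves_d_b D \<longleftrightarrow> \<not> alternating_boundary D"
proof
  assume "preserves_d_b D"
  show "\<not> alternating_boundary D"
  proof
    assume alternating: "alternating_boundary D"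
    have "1 \<in> tri_vertices doubled_triangle"
      unfolding tri_vertices_def doubled_triangle_def by auto
    then have "d_b doubled_triangle 1 = d_b (apply_flip D doubled_triangle 0 1) 1"
      using \<open>preserves_d_b D\<close> branched_triangulation_doubled_triangle
        flip_applicable_doubled_triangle[OF assms alternating]
      unfolding preserves_d_b_def by blast
    then show False
      using d_b_doubled_triangle d_b_apply_flip_doubled_triangle[OF assms alternating] by simp
  qed
next
  assume "\<not> alternating_boundary D"
  then show "preserves_d_b D"
    unfolding preserves_d_b_def by (auto simp: d_b_apply_flip[OF assms])
qed

theorem proposition2p1:
  assumes "bflip D"
  shows "sliding D \<longleftrightarrow>
    (\<forall>(T :: (nat, nat) btri) x1 x2.
       branched_triangulation T \<and> flip_applicable D T x1 x2 \<longrightarrow>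
       (\<forall>v \<in> tri_vertices T. d_b T v = d_b (apply_flip D T x1 x2) v))"
  using sliding_iff_not_alternating_boundary[OF assms]
    preserves_d_b_iff_not_alternating_boundary[OF assms]
  unfolding preserves_d_b_def by simp

end
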